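(* Let $a_1,a_2,b_1,b_2>0$ be integers, and let $m_1,m_2,n_1,n_2$ be positive integers such that $m_1+m_2>a_1+a_2$, $n_1+n_2>b_1+b_2$, $m_1-m_2=a_1-a_2$, $n_1-n_2=b_1-b_2$ and $\frac{n_1+n_2}{m_1+m_2}=\frac{b_1+b_2}{a_1+a_2}$. Then there exists a $(0,1)$ matrix $Y$ of size $(m_1+m_2)\times(n_1+n_2)$ such that $$Y\begin{bmatrix}\mathbf 1_{n_1}\\-\mathbf 1_{n_2}\end{bmatrix}=\begin{bmatrix}b_1\mathbf 1_{m_1}\\-b_2\mathbf 1_{m_2}\end{bmatrix},\qquad Y^T\begin{bmatrix}\mathbf 1_{m_1}\\-\mathbf 1_{m_2}\end{bmatrix}=\begin{bmatrix}a_1\mathbf 1_{n_1}\\-a_2\mathbf 1_{n_2}\end{bmatrix}.$$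
   Context: $\mathbf 1_p$ denotes the all-ones column vector of length $p$. *)

theory Defs
  imports Complex_Main
begin

definition zero_one_mat :: "nat \<Rightarrow> nat \<Rightarrow> (nat \<Rightarrow> nat \<Rightarrow> int) \<Rightarrow> bool" where
  "zero_one_mat m n Y \<longleftrightarrow> (\<forall>i<m. \<forall>j<n. Y i j \<in> {0, 1})"

end

theory Submission
  imports Defs
begin

text \<open>Put M = m1 + m2, N = n1 + n2, s = n1 + b2 and t = m1 + a2; given the difference
  hypotheses, the ratio hypothesis amounts to M s = N t. Take a (0,1) matrix W all of whose rows sum to s and all of whose columns
  sum to t, and complement its two off-diagonal blocks (rows < m1 against columns \<ge> n1 and
  vice versa). A row i < m1 then has signed sum s - n2 = b1, a row i \<ge> m1 has n1 - s = -b2,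
  and likewise for the columns. Such a W is the circulant band W i j = [(i - j) mod G < H]
  with G = gcd M N and H = gcd s t: each line runs through every residue mod G exactly
  N/G resp. M/G times, and (N/G) H = s, (M/G) H = t.\<close>

lemma sum_lessThan_mult_mod:
  fixes f :: "nat \<Rightarrow> 'a::semiring_1"
  shows "(\<Sum>x<k * G. f (x mod G)) = of_nat k * (\<Sum>x<G. f x)"
proof -
  have block: "(\<Sum>x\<in>{m * G..<m * G + G}. f (x mod G)) = (\<Sum>x<G. f x)" for m
  proof -
    have "(\<Sum>x\<in>{m * G..<m * G + G}. f (x mod G)) = (\<Sum>x\<in>{0..<G}. f ((x + m * G) mod G))"
      using sum.shift_bounds_nat_ivl[of "\<lambda>x. f (x mod G)" 0 "m * G" G] by (simp add: add.commute)
    also have "\<dots> = (\<Sum>x<G. f x)"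
      by (auto simp: atLeast0LessThan intro: sum.cong)
    finally show ?thesis .
  qed
  have "(\<Sum>x<k * G. f (x mod G)) = (\<Sum>m<k. \<Sum>x\<in>{m * G..<m * G + G}. f (x mod G))"
    by (rule sum.nat_group[symmetric])
  then show ?thesis by (simp add: block)
qed

lemma sum_affine_mod_reindex:
  fixes \<phi> :: "int \<Rightarrow> 'a::comm_monoid_add" and G :: nat
  assumes "G > 0" and "coprime \<sigma> (int G)"
  shows "(\<Sum>x<G. \<phi> ((c + \<sigma> * int x) mod int G)) = (\<Sum>y<G. \<phi> (int y))"
proof -
  define h where "h x = nat ((c + \<sigma> * int x) mod int G)" for x
  have h_int: "int (h x) = (c + \<sigma> * int x) mod int G" for x
    using assms(1) by (simp add: h_def)
  have "inj_on h {..<G}"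
  proof
    fix x y assume "x \<in> {..<G}" "y \<in> {..<G}" "h x = h y"
    then have "(c + \<sigma> * int x) mod int G = (c + \<sigma> * int y) mod int G"
      by (metis h_int)
    then have "int G dvd \<sigma> * (int x - int y)"
      by (simp only: mod_eq_dvd_iff) (simp add: right_diff_distrib)
    then have "int G dvd int x - int y"
      using assms(2) by (simp add: coprime_commute coprime_dvd_mult_right_iff)
    with \<open>x \<in> {..<G}\<close> \<open>y \<in> {..<G}\<close> show "x = y"
      by (simp add: mod_eq_dvd_iff[symmetric] flip: of_nat_mod)
  qed
  moreover have "h ` {..<G} \<subseteq> {..<G}"
    using assms(1) by (auto simp: h_def nat_less_iff)
  ultimately have "bij_betw h {..<G} {..<G}"
    by (simp add: bij_betw_def endo_inj_surj)
  from sum.reindex_bij_betw[OF this, of "\<lambda>y. \<phi> (int y)"] show ?thesis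
    by (simp add: h_int)
qed

lemma sum_affine_mod:
  fixes \<phi> :: "int \<Rightarrow> 'a::semiring_1" and G L :: nat
  assumes "G > 0" and "coprime \<sigma> (int G)" and "G dvd L"
  shows "(\<Sum>x<L. \<phi> ((c + \<sigma> * int x) mod int G))
           = of_nat (L div G) * (\<Sum>y<G. \<phi> (int y))"
proof -
  have periodic: "(c + \<sigma> * int (x mod G)) mod int G = (c + \<sigma> * int x) mod int G" for x
    unfolding of_nat_mod mod_add_right_eq[of c "\<sigma> * (int x mod int G)", symmetric]
    by (simp only: mod_mult_right_eq mod_add_right_eq)
  have "(\<Sum>x<L. \<phi> ((c + \<sigma> * int x) mod int G))
        = (\<Sum>x<L div G * G. \<phi> ((c + \<sigma> * int (x mod G)) mod int G))"
    using assms(3) by (simp add: periodic)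
  also have "\<dots> = of_nat (L div G) * (\<Sum>y<G. \<phi> (int y))"
    using sum_lessThan_mult_mod[of "\<lambda>x. \<phi> ((c + \<sigma> * int x) mod int G)"]
    by (simp add: sum_affine_mod_reindex assms(1,2))
  finally show ?thesis .
qed

definition circulant_band :: "nat \<Rightarrow> nat \<Rightarrow> nat \<Rightarrow> nat \<Rightarrow> int" where
  "circulant_band G H i j = (if (int i - int j) mod int G < int H then 1 else 0)"

lemma sum_lessThan_if_less:
  assumes "H \<le> G"
  shows "(\<Sum>y<G. if y < H then 1 else 0 :: int) = int H"
proof -
  have "{..<G} \<inter> {y. y < H} = {..<H}" using assms by auto
  then show ?thesis by (simp add: sum.If_cases)
qed

lemma sum_circulant_band_row:
  assumes "G > 0" "H \<le> G" "G dvd N"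
  shows "(\<Sum>j<N. circulant_band G H i j) = int (N div G * H)"
  using sum_affine_mod[OF assms(1) _ assms(3),
      where \<sigma> = "-1" and c = "int i" and \<phi> = "\<lambda>y. if y < int H then 1 else 0 :: int"]
  by (simp add: circulant_band_def sum_lessThan_if_less assms(2))

lemma sum_circulant_band_column:
  assumes "G > 0" "H \<le> G" "G dvd M"
  shows "(\<Sum>i<M. circulant_band G H i j) = int (M div G * H)"
  using sum_affine_mod[OF assms(1) _ assms(3),
      where \<sigma> = 1 and c = "- int j" and \<phi> = "\<lambda>y. if y < int H then 1 else 0 :: int"]
  by (simp add: circulant_band_def sum_lessThan_if_less assms(2))

lemma mult_gcd_of_cross_mult:
  fixes M N s t :: nat
  assumes "M * s = N * t"
  shows "N * gcd s t = s * gcd M N"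
proof -
  have "s * gcd M N = gcd (N * t) (N * s)"
    using assms by (simp add: gcd_mult_distrib_nat mult.commute)
  then show ?thesis by (simp add: gcd_mult_distrib_nat gcd.commute)
qed

lemma exists_zero_one_mat_constant_line_sums:
  fixes M N s t :: nat
  assumes "M * s = N * t" and "s \<le> N" and "t \<le> M"
  shows "\<exists>W. zero_one_mat M N W \<and> (\<forall>i<M. (\<Sum>j<N. W i j) = int s)
                               \<and> (\<forall>j<N. (\<Sum>i<M. W i j) = int t)"
proof (cases "M = 0 \<or> N = 0")
  case True
  with assms(1,2) show ?thesis
    by (intro exI[of _ "\<lambda>_ _. 0"]) (auto simp: zero_one_mat_def)
next
  case False
  define G where "G = gcd M N"
  define H where "H = gcd s t"
  have "G > 0" using False by (simp add: G_def)
  have NH: "N * H = s * G" and MH: "M * H = t * G"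
    using mult_gcd_of_cross_mult[OF assms(1)] mult_gcd_of_cross_mult[OF assms(1)[symmetric]]
    by (simp_all add: G_def H_def gcd.commute)
  have "N * H \<le> N * G" using NH assms(2) by simp
  then have "H \<le> G" using False by simp
  have "N div G * H * G = s * G" "M div G * H * G = t * G"
    using NH MH by (simp_all add: G_def mult.commute mult.left_commute)
  then have "N div G * H = s" "M div G * H = t"
    using \<open>G > 0\<close> by simp_all
  then show ?thesis
    using sum_circulant_band_row[OF \<open>G > 0\<close> \<open>H \<le> G\<close>]
      sum_circulant_band_column[OF \<open>G > 0\<close> \<open>H \<le> G\<close>]
    by (intro exI[of _ "circulant_band G H"]) (auto simp: zero_one_mat_def circulant_band_def G_def)
qed

lemma signed_sum_flip_block:
  fixes w :: "nat \<Rightarrow> int"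
  assumes "(\<Sum>j<n1 + n2. w j) = r"
  shows "(\<Sum>j<n1. if P = (j < n1) then w j else 1 - w j)
           - (\<Sum>j\<in>{n1..<n1 + n2}. if P = (j < n1) then w j else 1 - w j)
         = (if P then r - int n2 else int n1 - r)"
proof -
  have "(\<Sum>j<n1. w j) + (\<Sum>j\<in>{n1..<n1 + n2}. w j) = r"
    using assms sum.atLeastLessThan_concat[of 0 n1 "n1 + n2" w] by (simp add: atLeast0LessThan)
  then show ?thesis by (simp add: sum_subtractf)
qed

theorem lemma4p33:
  fixes a1 a2 b1 b2 :: int and m1 m2 n1 n2 :: nat
  assumes "a1 > 0" "a2 > 0" "b1 > 0" "b2 > 0"
    and "m1 > 0" "m2 > 0" "n1 > 0" "n2 > 0"
    and "int (m1 + m2) > a1 + a2" and "int (n1 + n2) > b1 + b2"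
    and "int m1 - int m2 = a1 - a2" and "int n1 - int n2 = b1 - b2"
    and "real (n1 + n2) / real (m1 + m2) = real_of_int (b1 + b2) / real_of_int (a1 + a2)"
  shows "\<exists>Y :: nat \<Rightarrow> nat \<Rightarrow> int. zero_one_mat (m1 + m2) (n1 + n2) Y \<and>
    (\<forall>i < m1 + m2. (\<Sum>j<n1. Y i j) - (\<Sum>j\<in>{n1..<n1+n2}. Y i j)
        = (if i < m1 then b1 else - b2)) \<and>
    (\<forall>j < n1 + n2. (\<Sum>i<m1. Y i j) - (\<Sum>i\<in>{m1..<m1+m2}. Y i j)
        = (if j < n1 then a1 else - a2))"
proof -
  define s where "s = n1 + nat b2"
  define t where "t = m1 + nat a2"
  have s: "int s = int n1 + b2" and t: "int t = int m1 + a2"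
    using assms(2,4) by (simp_all add: s_def t_def)
  have "real_of_int (int (n1 + n2) * (a1 + a2)) = real_of_int (int (m1 + m2) * (b1 + b2))"
    using assms(1,2,5,13) by (simp add: field_simps)
  then have ratio: "int (n1 + n2) * (a1 + a2) = int (m1 + m2) * (b1 + b2)"
    by (simp only: of_int_eq_iff)
  have "2 * (int (m1 + m2) * int s) = 2 * (int (n1 + n2) * int t)"
    using ratio s t assms(11,12) unfolding of_nat_add by algebra
  then have "(m1 + m2) * s = (n1 + n2) * t"
    by (simp only: mult_cancel_left of_nat_mult[symmetric] of_nat_eq_iff) simp
  moreover have "s \<le> n1 + n2" "t \<le> m1 + m2"
    using s t assms(9-12) by simp_all
  ultimately obtain W where W: "zero_one_mat (m1 + m2) (n1 + n2) W"
    "\<forall>i<m1 + m2. (\<Sum>j<n1 + n2. W i j) = int s"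
    "\<forall>j<n1 + n2. (\<Sum>i<m1 + m2. W i j) = int t"
    using exists_zero_one_mat_constant_line_sums by blast
  define Y where "Y i j = (if (i < m1) = (j < n1) then W i j else 1 - W i j)" for i j
  have "zero_one_mat (m1 + m2) (n1 + n2) Y"
    using W(1) by (auto simp: zero_one_mat_def Y_def)
  moreover have "(\<Sum>j<n1. Y i j) - (\<Sum>j\<in>{n1..<n1+n2}. Y i j) = (if i < m1 then b1 else - b2)"
    if "i < m1 + m2" for i
    using signed_sum_flip_block[where w = "W i" and P = "i < m1"] W(2) that s assms(12)
    by (simp add: Y_def)
  moreover have "(\<Sum>i<m1. Y i j) - (\<Sum>i\<in>{m1..<m1+m2}. Y i j) = (if j < n1 then a1 else - a2)"
    if "j < n1 + n2" for j
    using signed_sum_flip_block[where w = "\<lambda>i. W i j" and P = "j < n1"] W(3) that t assms(11)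
    by (simp add: Y_def eq_commute[of "j < n1"])
  ultimately show ?thesis by blast
qed

end
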